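(* Let $\omega\in\mathbb{F}_8$ be a root of $y^3+y+1$ and let $m\in\mathbb{N}$. Suppose $L,M,N$ are nonempty subsets of $[m]$ with $L\cup M\cup N\subsetneq[m]$, and at least two of the sets $L\setminus(M\cup N)$, $M\setminus(N\cup L)$, $N\setminus(L\cup M)$ are nonempty. Let $D=\Delta_L+\omega\Delta_M+\omega^2\Delta_N\subseteq\mathbb{F}_8^m$ and $D^c=\mathbb{F}_8^m\setminus D$. Writing $s=|L|+|M|+|N|$, the code $C_{D^c}$ is a $[2^{3m}-2^{s},\,m,\,7\cdot2^{3(m-1)}-7\cdot2^{s-3}]$ linear $4$-weight code over $\mathbb{F}_8$, whose codewords have weights $0$, $7\cdot2^{3(m-1)}-7\cdot2^{s-3}$, $7\cdot2^{3(m-1)}-6\cdot2^{s-3}$, $7\cdot2^{3(m-1)}-4\cdot2^{s-3}$ and $7\cdot2^{3(m-1)}$. Moreover, $C_{D^c}$ is a Griesmer code and hence distance optimal, and it is a minimal code if $s\le 3m-4$.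
   Context: $[m]=\{1,\dots,m\}$; $\Delta_L=\{w\in\mathbb{F}_2^m:\{i:w_i\ne0\}\subseteq L\}$. $A+\omega B+\omega^2C=\{a+\omega b+\omega^2c: a\in A,b\in B,c\in C\}$. For an ordered finite set $P\subseteq\mathbb{F}_8^m$, $C_P=\{(v\cdot d)_{d\in P}: v\in\mathbb{F}_8^m\}$ with $v\cdot d=\sum_iv_id_i$. An $l$-weight code has exactly $l$ distinct nonzero Hamming weights. An $[n,k,d]$ code over $\mathbb{F}_q$ is Griesmer if $\sum_{i=0}^{k-1}\lceil d/q^i\rceil=n$, and distance optimal if no $[n,k,d+1]$ linear code over $\mathbb{F}_q$ exists. A code is minimal if for every nonzero codeword $c$, each nonzero codeword $c'$ with $\mathrm{Supp}(c')\subseteq\mathrm{Supp}(c)$ is a scalar multiple of $c$. *)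

theory Defs
  imports Complex_Main "HOL-Library.Function_Algebras"
begin

text \<open>Vectors of length m over a field 'a: functions nat => 'a supported on [m] = {1..m}.\<close>
definition fvec :: "nat \<Rightarrow> (nat \<Rightarrow> 'a::field) set" where
  "fvec m = {v. \<forall>i. i \<notin> {1..m} \<longrightarrow> v i = 0}"

definition Delta :: "nat \<Rightarrow> nat set \<Rightarrow> (nat \<Rightarrow> 'a::field) set" where
  "Delta m L = {w \<in> fvec m. (\<forall>i. w i \<in> {0, 1}) \<and> {i. w i \<noteq> 0} \<subseteq> L}"

definition sumset3 :: "'a::field \<Rightarrow> (nat \<Rightarrow> 'a) set \<Rightarrow> (nat \<Rightarrow> 'a) set \<Rightarrow> (nat \<Rightarrow> 'a) set
    \<Rightarrow> (nat \<Rightarrow> 'a) set" where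
  "sumset3 \<omega> A B C = {(\<lambda>i. a i + \<omega> * b i + \<omega>^2 * c i) | a b c. a \<in> A \<and> b \<in> B \<and> c \<in> C}"

definition dotp :: "nat \<Rightarrow> (nat \<Rightarrow> 'a::field) \<Rightarrow> (nat \<Rightarrow> 'a) \<Rightarrow> 'a" where
  "dotp m v d = (\<Sum>i\<in>{1..m}. v i * d i)"

text \<open>The code C_P: codewords are indexed by the positions d in P (zero outside P).\<close>
definition codeP :: "nat \<Rightarrow> (nat \<Rightarrow> 'a::field) set \<Rightarrow> ((nat \<Rightarrow> 'a) \<Rightarrow> 'a) set" where
  "codeP m P = {(\<lambda>d. if d \<in> P then dotp m v d else 0) | v. v \<in> fvec m}"

text \<open>Generic notions for codes whose coordinates are indexed by a finite set I;
  a word is a function 'i => 'a vanishing outside I.\<close>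
definition words :: "'i set \<Rightarrow> ('i \<Rightarrow> 'a::field) set" where
  "words I = {c. \<forall>i. i \<notin> I \<longrightarrow> c i = 0}"

definition supp :: "'i set \<Rightarrow> ('i \<Rightarrow> 'a::field) \<Rightarrow> 'i set" where
  "supp I c = {i \<in> I. c i \<noteq> 0}"

definition hwt :: "'i set \<Rightarrow> ('i \<Rightarrow> 'a::field) \<Rightarrow> nat" where
  "hwt I c = card (supp I c)"

definition fscale :: "'a::field \<Rightarrow> ('i \<Rightarrow> 'a) \<Rightarrow> ('i \<Rightarrow> 'a)" where
  "fscale a c = (\<lambda>i. a * c i)"

interpretation fvs: vector_space "fscale :: 'a::field \<Rightarrow> ('i \<Rightarrow> 'a) \<Rightarrow> _"
  by unfold_locales (auto simp: fscale_def algebra_simps fun_eq_iff)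

definition is_linear_code :: "'i set \<Rightarrow> ('i \<Rightarrow> 'a::field) set \<Rightarrow> bool" where
  "is_linear_code I C \<longleftrightarrow> finite I \<and> C \<subseteq> words I \<and> fvs.subspace C"

definition code_dim :: "('i \<Rightarrow> 'a::field) set \<Rightarrow> nat" where
  "code_dim C = fvs.dim C"

definition nonzero_weights :: "'i set \<Rightarrow> ('i \<Rightarrow> 'a::field) set \<Rightarrow> nat set" where
  "nonzero_weights I C = {hwt I c | c. c \<in> C \<and> c \<noteq> 0}"

definition min_dist :: "'i set \<Rightarrow> ('i \<Rightarrow> 'a::field) set \<Rightarrow> nat" where
  "min_dist I C = Min (nonzero_weights I C)"

definition is_nkd_code :: "'i set \<Rightarrow> ('i \<Rightarrow> 'a::field) set \<Rightarrow> nat \<Rightarrow> nat \<Rightarrow> nat \<Rightarrow> bool" where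
  "is_nkd_code I C n k d \<longleftrightarrow> is_linear_code I C \<and> card I = n \<and> code_dim C = k \<and> min_dist I C = d"

definition is_l_weight :: "'i set \<Rightarrow> ('i \<Rightarrow> 'a::field) set \<Rightarrow> nat \<Rightarrow> bool" where
  "is_l_weight I C l \<longleftrightarrow> card (nonzero_weights I C) = l"

definition is_griesmer :: "'i set \<Rightarrow> ('i \<Rightarrow> 'a::{field,finite}) set \<Rightarrow> bool" where
  "is_griesmer I C \<longleftrightarrow>
     (\<Sum>i<code_dim C. nat \<lceil>real (min_dist I C) / real (card (UNIV :: 'a set)) ^ i\<rceil>) = card I"

definition distance_optimal :: "'i set \<Rightarrow> ('i \<Rightarrow> 'a::field) set \<Rightarrow> bool" where
  "distance_optimal I C \<longleftrightarrow>
     \<not> (\<exists>C' :: (nat \<Rightarrow> 'a) set. is_nkd_code {1..card I} C' (card I) (code_dim C) (min_dist I C + 1))"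

definition is_minimal_code :: "'i set \<Rightarrow> ('i \<Rightarrow> 'a::field) set \<Rightarrow> bool" where
  "is_minimal_code I C \<longleftrightarrow>
     (\<forall>c\<in>C. c \<noteq> 0 \<longrightarrow> (\<forall>c'\<in>C. c' \<noteq> 0 \<and> supp I c' \<subseteq> supp I c \<longrightarrow> (\<exists>a. c' = fscale a c)))"

end

theory Submission
  imports Defs "HOL-Number_Theory.Residues" "HOL-Library.Indicator_Function"
begin

(* Since 1, omega, omega^2 is a basis of GF(8) over GF(2), the defining set D is a GF(2)-subspace
   of GF(8)^m with 2^s elements.  For v <> 0 the codeword of v in C_{D^c} has weight
   7 * 8^(m-1) - #{d in D. v.d <> 0}: the hyperplane v.d = 0 of GF(8)^m has 8^(m-1) elements.
   The image v.D is an additive subgroup of GF(8) of size 2^i with i <= 3, each of its fibres in D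
   has 2^(s-i) elements, and so the weight is 7 * 8^(m-1) - 2^s + 2^(s-i).  All four values of i
   occur: take a unit vector outside L u M u N (i = 0), a unit vector at a coordinate belonging to
   only one of the sets (i = 1), the sum of two such coordinates of different sets (i = 2), and the
   indicator of L u M u N (i = 3).  The Griesmer equality is then arithmetic, distance optimality
   follows from the Plotkin bound, and minimality from the Ashikhmin-Barg criterion
   w_min / w_max > 7/8, which holds as soon as s <= 3m - 4. *)

lemma CHAR_eq_2_if_card_8:
  assumes "card (UNIV :: 'a::{field,finite} set) = 8"
  shows "CHAR('a) = 2"
proof -
  have "prime CHAR('a)"
    by (intro prime_CHAR_semidom finite_imp_CHAR_pos) simp
  moreover have "CHAR('a) dvd 2 ^ 3"
    using CHAR_dvd_CARD[where 'a='a] assms by simp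
  ultimately show ?thesis
    by (metis prime_dvd_power primes_dvd_imp_eq two_is_prime_nat)
qed

lemma card_UNIV_field_ge_2: "2 \<le> card (UNIV :: 'a::{field,finite} set)"
  using card_mono[of "UNIV :: 'a set" "{0, 1}"] by simp

lemma card_eq_card_image_mult_card_kernel:
  fixes f :: "'b::ab_group_add \<Rightarrow> 'c::ab_group_add"
  assumes fin: "finite G" and diff: "\<And>x y. x \<in> G \<Longrightarrow> y \<in> G \<Longrightarrow> x - y \<in> G"
    and hom: "\<And>x y. x \<in> G \<Longrightarrow> y \<in> G \<Longrightarrow> f (x - y) = f x - f y"
  shows "card G = card (f ` G) * card {x\<in>G. f x = 0}"
proof -
  have zero: "0 \<in> G" and f_zero: "f 0 = 0" if "x0 \<in> G" for x0
    using diff[OF that that] hom[OF that that] by simp_all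
  have neg: "- x \<in> G" and f_neg: "f (- x) = - f x" if "x \<in> G" for x
    using diff[OF zero[OF that] that] hom[OF zero[OF that] that] f_zero[OF that] by simp_all
  have add: "x + y \<in> G" and f_add: "f (x + y) = f x + f y" if "x \<in> G" "y \<in> G" for x y
    using diff[OF that(1) neg[OF that(2)]] hom[OF that(1) neg[OF that(2)]] f_neg[OF that(2)]
    by simp_all
  have fibre: "card {x\<in>G. f x = f x0} = card {x\<in>G. f x = 0}" if x0: "x0 \<in> G" for x0
    by (rule bij_betw_same_card[of "\<lambda>x. x - x0"], rule bij_betw_byWitness[of _ "\<lambda>x. x + x0"])
      (use x0 diff hom add f_add in auto)
  have "card G = (\<Sum>y\<in>f ` G. card {x\<in>G. f x = y})"
    using sum.group[of G "f ` G" f "\<lambda>_. 1::nat"] fin by simp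
  also have "\<dots> = (\<Sum>y\<in>f ` G. card {x\<in>G. f x = 0})"
    using fibre by (intro sum.cong) auto
  finally show ?thesis by simp
qed

lemma
  assumes "finite I"
  shows finite_words: "finite (words I :: ('i \<Rightarrow> 'a::{field,finite}) set)"
    and card_words: "card (words I :: ('i \<Rightarrow> 'a) set) = card (UNIV :: 'a set) ^ card I"
proof -
  have bij: "bij_betw (\<lambda>c. restrict c I) (words I :: ('i \<Rightarrow> 'a) set) (PiE I (\<lambda>_. UNIV))"
    by (rule bij_betw_byWitness[where f'="\<lambda>f i. if i \<in> I then f i else 0"])
      (auto simp: words_def fun_eq_iff PiE_def extensional_def)
  show "finite (words I :: ('i \<Rightarrow> 'a) set)"
    using bij_betw_finite[OF bij] assms by (simp add: finite_PiE)
  show "card (words I :: ('i \<Rightarrow> 'a) set) = card (UNIV :: 'a set) ^ card I"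
    using bij_betw_same_card[OF bij] assms by (simp add: card_PiE)
qed

section \<open>Linear codes over a finite field\<close>

lemma finite_linear_code:
  "is_linear_code I (C :: ('i \<Rightarrow> 'a::{field,finite}) set) \<Longrightarrow> finite C"
  unfolding is_linear_code_def using finite_words finite_subset by blast

lemma card_linear_code:
  fixes C :: "('i \<Rightarrow> 'a::{field,finite}) set"
  assumes lin: "is_linear_code I C"
  shows "card C = card (UNIV :: 'a set) ^ code_dim C"
proof -
  have sub: "fvs.subspace C"
    using lin unfolding is_linear_code_def by simp
  obtain B where B: "B \<subseteq> C" "fvs.independent B" "C \<subseteq> fvs.span B" "card B = code_dim C"
    unfolding code_dim_def by (rule fvs.basis_exists)
  have finB: "finite B"
    using B(1) finite_linear_code[OF lin] finite_subset by blast
  have span: "fvs.span B = C"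
    using B(1,3) fvs.span_minimal[OF B(1) sub] by blast
  define comb where "comb u = (\<Sum>v\<in>B. fscale (u v) v)" for u
  have "inj_on comb (PiE B (\<lambda>_. UNIV))"
  proof (rule inj_onI)
    fix u u' assume u: "u \<in> PiE B (\<lambda>_. UNIV)" "u' \<in> PiE B (\<lambda>_. UNIV)" and "comb u = comb u'"
    then have "(\<Sum>v\<in>B. fscale (u v - u' v) v) = 0"
      unfolding comb_def by (simp add: fvs.scale_left_diff_distrib sum_subtractf)
    then have "u v - u' v = 0" if "v \<in> B" for v
      using fvs.independentD[OF B(2) finB subset_refl, of "\<lambda>v. u v - u' v"] that by blast
    then show "u = u'"
      using PiE_ext[OF u] by simp
  qed
  moreover have "comb ` PiE B (\<lambda>_. UNIV) = C"
  proof -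
    have "comb u = comb (restrict u B)" for u
      unfolding comb_def by (intro sum.cong) auto
    then have "comb ` PiE B (\<lambda>_. UNIV) = range comb"
      by (auto intro!: image_eqI[of _ comb "restrict _ B"])
    also have "\<dots> = C"
      using fvs.span_finite[OF finB] span unfolding comb_def by simp
    finally show ?thesis .
  qed
  ultimately have "card C = card (PiE B (\<lambda>_. UNIV :: 'a set))"
    using card_image by fastforce
  then show ?thesis
    using finB B(4) by (simp add: card_PiE)
qed

lemma card_nonzero_at_le:
  fixes C :: "('i \<Rightarrow> 'a::{field,finite}) set"
  assumes lin: "is_linear_code I C"
  shows "card (UNIV :: 'a set) * card {c\<in>C. c i \<noteq> 0} \<le> (card (UNIV :: 'a set) - 1) * card C"
proof -
  let ?q = "card (UNIV :: 'a set)" and ?a = "card ((\<lambda>c. c i) ` C)" and ?k = "card {c\<in>C. c i = 0}"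
  have finC: "finite C" and sub: "fvs.subspace C"
    using lin finite_linear_code unfolding is_linear_code_def by auto
  have C: "card C = ?a * ?k"
    by (rule card_eq_card_image_mult_card_kernel[OF finC]) (use fvs.subspace_diff[OF sub] in auto)
  have "{c\<in>C. c i \<noteq> 0} = C - {c\<in>C. c i = 0}"
    by blast
  then have nonzero: "card {c\<in>C. c i \<noteq> 0} = (?a - 1) * ?k"
    using C card_Diff_subset[of "{c\<in>C. c i = 0}" C] finC by (simp add: diff_mult_distrib)
  have "?a \<le> ?q"
    by (rule card_mono) auto
  then have "?q * (?a - 1) \<le> (?q - 1) * ?a"
    by (simp add: diff_mult_distrib diff_mult_distrib2 mult.commute)
  then have "?q * (?a - 1) * ?k \<le> (?q - 1) * ?a * ?k"
    by (rule mult_le_mono1)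
  then show ?thesis
    unfolding nonzero C by (simp only: mult.assoc)
qed

theorem plotkin_bound:
  fixes C :: "('i \<Rightarrow> 'a::{field,finite}) set"
  assumes lin: "is_linear_code I C" and d: "\<And>c. c \<in> C \<Longrightarrow> c \<noteq> 0 \<Longrightarrow> d \<le> hwt I c"
  shows "card (UNIV :: 'a set) * ((card C - 1) * d) \<le> (card (UNIV :: 'a set) - 1) * card C * card I"
proof -
  let ?q = "card (UNIV :: 'a set)"
  have finC: "finite C" and finI: "finite I" and zero: "0 \<in> C"
    using lin finite_linear_code fvs.subspace_0 unfolding is_linear_code_def by auto
  have "(card C - 1) * d = (\<Sum>c\<in>C - {0}. d)"
    using finC zero by simp
  also have "\<dots> \<le> (\<Sum>c\<in>C - {0}. hwt I c)"
    using d by (intro sum_mono) auto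
  also have "\<dots> \<le> (\<Sum>c\<in>C. hwt I c)"
    using finC by (intro sum_mono2) auto
  also have "\<dots> = (\<Sum>i\<in>I. card {c\<in>C. c i \<noteq> 0})"
    using sum.swap_restrict[OF finC finI, of "\<lambda>_ _. 1::nat" "\<lambda>c i. c i \<noteq> 0"]
    unfolding hwt_def supp_def by simp
  finally have "?q * ((card C - 1) * d) \<le> (\<Sum>i\<in>I. ?q * card {c\<in>C. c i \<noteq> 0})"
    by (simp add: sum_distrib_left[symmetric])
  also have "\<dots> \<le> (\<Sum>i\<in>I. (?q - 1) * card C)"
    by (intro sum_mono card_nonzero_at_le[OF lin])
  finally show ?thesis
    by (simp add: mult.commute)
qed

corollary plotkin_bound_dim:
  fixes C :: "('i \<Rightarrow> 'a::{field,finite}) set"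
  assumes code: "is_nkd_code I C n k d"
  shows "card (UNIV :: 'a set) ^ k * (card (UNIV :: 'a set) * d - (card (UNIV :: 'a set) - 1) * n)
           \<le> card (UNIV :: 'a set) * d"
proof -
  let ?q = "card (UNIV :: 'a set)"
  have lin: "is_linear_code I C" and n: "card I = n" and K: "card C = ?q ^ k"
    and d: "d = Min (nonzero_weights I C)"
    using code card_linear_code unfolding is_nkd_code_def min_dist_def by auto
  have "finite (nonzero_weights I C)"
    using finite_linear_code[OF lin] unfolding nonzero_weights_def by simp
  then have "d \<le> hwt I c" if "c \<in> C" "c \<noteq> 0" for c
    unfolding d using that by (auto simp: nonzero_weights_def intro: Min_le)
  from plotkin_bound[OF lin this]
  have "?q * ((?q ^ k - 1) * d) \<le> (?q - 1) * ?q ^ k * n"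
    unfolding K n .
  moreover have "?q ^ k \<ge> 1"
    using card_UNIV_field_ge_2[where 'a='a] by simp
  ultimately show ?thesis
    by (simp add: diff_mult_distrib diff_mult_distrib2 algebra_simps)
qed

(* A coordinate of the support of c vanishes in c' - a c for exactly one scalar a. *)
lemma sum_hwt_diff_scaled:
  fixes c c' :: "'i \<Rightarrow> 'a::{field,finite}"
  assumes fin: "finite I" and supp: "supp I c' \<subseteq> supp I c"
  shows "(\<Sum>a\<in>UNIV. hwt I (c' - fscale a c)) = (card (UNIV :: 'a set) - 1) * hwt I c"
proof -
  have count: "card {a. c' i - a * c i \<noteq> 0} = (if c i \<noteq> 0 then card (UNIV :: 'a set) - 1 else 0)"
    if "i \<in> I" for i
  proof (cases "c i = 0")
    case True
    with supp that have "c' i = 0"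
      unfolding supp_def by auto
    with True show ?thesis
      by simp
  next
    case False
    then have "{a. c' i - a * c i \<noteq> 0} = UNIV - {c' i / c i}"
      by (auto simp: field_simps)
    with False show ?thesis
      by (simp add: card_Diff_singleton)
  qed
  have "(\<Sum>a\<in>UNIV. hwt I (c' - fscale a c)) = (\<Sum>i\<in>I. card {a. c' i - a * c i \<noteq> 0})"
    using sum.swap_restrict[OF finite_UNIV fin, of "\<lambda>_ _. 1::nat" "\<lambda>a i. c' i - a * c i \<noteq> 0"]
    unfolding hwt_def supp_def fscale_def by simp
  also have "\<dots> = (\<Sum>i\<in>I. if c i \<noteq> 0 then card (UNIV :: 'a set) - 1 else 0)"
    using count by simp
  also have "\<dots> = (card (UNIV :: 'a set) - 1) * hwt I c"
    unfolding hwt_def supp_def using fin by (simp add: sum.inter_filter[symmetric])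
  finally show ?thesis .
qed

theorem minimal_code_if_weight_ratio:
  fixes C :: "('i \<Rightarrow> 'a::{field,finite}) set"
  assumes lin: "is_linear_code I C"
    and weights: "\<And>c. c \<in> C \<Longrightarrow> c \<noteq> 0 \<Longrightarrow> wmin \<le> hwt I c \<and> hwt I c \<le> wmax"
    and ratio: "(card (UNIV :: 'a set) - 1) * wmax < card (UNIV :: 'a set) * wmin"
  shows "is_minimal_code I C"
  unfolding is_minimal_code_def
proof (intro ballI impI)
  fix c c' assume c: "c \<in> C" "c \<noteq> 0" and c': "c' \<in> C" "c' \<noteq> 0 \<and> supp I c' \<subseteq> supp I c"
  have sub: "fvs.subspace C" and fin: "finite I"
    using lin unfolding is_linear_code_def by auto
  show "\<exists>a. c' = fscale a c"
  proof (rule ccontr)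
    assume not_multiple: "\<nexists>a. c' = fscale a c"
    have "(\<Sum>a\<in>(UNIV :: 'a set). wmin) \<le> (\<Sum>a\<in>UNIV. hwt I (c' - fscale a c))"
    proof (rule sum_mono)
      fix a :: 'a
      have "c' - fscale a c \<in> C"
        using fvs.subspace_diff[OF sub c'(1) fvs.subspace_scale[OF sub c(1)]] .
      moreover have "c' - fscale a c \<noteq> 0"
        using not_multiple by auto
      ultimately show "wmin \<le> hwt I (c' - fscale a c)"
        using weights by blast
    qed
    also have "\<dots> = (card (UNIV :: 'a set) - 1) * hwt I c"
      using sum_hwt_diff_scaled[OF fin] c' by blast
    also have "\<dots> \<le> (card (UNIV :: 'a set) - 1) * wmax"
      using weights[OF c] by simp
    finally show False
      using ratio by simp
  qed
qed

section \<open>The Griesmer sum for q = 8\<close>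

lemma sum_div_pow_Suc: "(\<Sum>i<Suc n. (x::nat) div b ^ i) = x + (\<Sum>i<n. x div b div b ^ i)"
  unfolding sum.lessThan_Suc_shift by (simp add: div_mult2_eq)

lemma sum_div_pow_less:
  assumes "(x::nat) < b"
  shows "(\<Sum>i<n. x div b ^ i) = (if n = 0 then 0 else x)"
proof (cases n)
  case (Suc n')
  then show ?thesis
    using assms by (simp only: sum_div_pow_Suc) simp
qed simp

lemma sum_div_pow8:
  "7 * 2 ^ t < (8::nat) ^ n \<Longrightarrow> (\<Sum>i<n. (7 * 2 ^ t) div 8 ^ i) = 8 * 2 ^ t - (1::nat)"
proof (induction t arbitrary: n rule: less_induct)
  case (less t)
  then obtain n' where n: "n = Suc n'"
    by (cases n) auto
  show ?case
  proof (cases "t \<ge> 3")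
    case True
    then have "(2::nat) ^ t = 2 ^ 3 * 2 ^ (t - 3)"
      by (metis le_add_diff_inverse power_add)
    then have t: "(2::nat) ^ t = 8 * 2 ^ (t - 3)"
      by simp
    have "(\<Sum>i<n'. (7 * 2 ^ (t - 3)) div 8 ^ i) = 8 * 2 ^ (t - 3) - (1::nat)"
      using less.IH[of "t - 3" n'] less.prems True n t by simp
    then show ?thesis
      unfolding n sum_div_pow_Suc using t by simp
  next
    case False
    then have "t = 0 \<or> t = 1 \<or> t = 2"
      by linarith
    moreover have "n' \<noteq> 0" if "t \<noteq> 0"
    proof
      assume "n' = 0"
      then have "7 * 2 ^ t < (8::nat)"
        using less.prems n by simp
      moreover have "(2::nat) \<le> 2 ^ t"
        using that by (simp add: self_le_power)
      ultimately show False
        by linarith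
    qed
    ultimately show ?thesis
      unfolding n sum_div_pow_Suc by (auto simp: sum_div_pow_less)
  qed
qed

lemma sum_geometric8: "(\<Sum>i<m. 7 * 8 ^ i) = 8 ^ m - (1::nat)"
  by (induction m) simp_all

lemma ceiling_of_int_diff: "\<lceil>of_int k - x\<rceil> = k - \<lfloor>x\<rfloor>"
  using ceiling_add_of_int[of "- x" k] by (simp add: ceiling_minus)

lemma sum_ceiling_griesmer8:
  assumes t: "t + 3 \<le> 3 * (m - 1)"
  shows "(\<Sum>i<m. nat \<lceil>real (7 * 8 ^ (m - 1) - 7 * 2 ^ t) / 8 ^ i\<rceil>) = 8 ^ m - 8 * 2 ^ t"
proof -
  have "(2::nat) ^ (t + 3) \<le> 2 ^ (3 * (m - 1))"
    using t by (intro power_increasing) auto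
  then have small: "8 * 2 ^ t \<le> (8::nat) ^ (m - 1)"
    by (simp add: power_add power_mult)
  have m: "8 ^ m = 8 * (8::nat) ^ (m - 1)"
    using t by (cases m) auto
  have le: "(7 * 2 ^ t) div 8 ^ i \<le> 7 * (8::nat) ^ (m - 1 - i)"
    and summand: "nat \<lceil>real (7 * 8 ^ (m - 1) - 7 * 2 ^ t) / 8 ^ i\<rceil>
                 = 7 * 8 ^ (m - 1 - i) - (7 * 2 ^ t) div 8 ^ i"
    if "i < m" for i
  proof -
    have split: "(8::nat) ^ (m - 1) = 8 ^ i * 8 ^ (m - 1 - i)"
      using that by (simp flip: power_add)
    have "(7 * 2 ^ t) div 8 ^ i \<le> (7 * 8 ^ (m - 1)) div (8::nat) ^ i"
      using small by (intro div_le_mono) simp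
    then show le: "(7 * 2 ^ t) div 8 ^ i \<le> 7 * (8::nat) ^ (m - 1 - i)"
      unfolding split by simp
    have "real (7 * 8 ^ (m - 1) - 7 * 2 ^ t) / 8 ^ i
          = of_int (int (7 * 8 ^ (m - 1 - i))) - real (7 * 2 ^ t) / real (8 ^ i)"
      using small unfolding split by (simp add: of_nat_diff diff_divide_distrib)
    then have "\<lceil>real (7 * 8 ^ (m - 1) - 7 * 2 ^ t) / 8 ^ i\<rceil>
               = int (7 * 8 ^ (m - 1 - i)) - \<lfloor>real (7 * 2 ^ t) / real (8 ^ i)\<rfloor>"
      by (simp only: ceiling_of_int_diff)
    also have "\<lfloor>real (7 * 2 ^ t) / real (8 ^ i)\<rfloor> = int ((7 * 2 ^ t) div 8 ^ i)"
      by (rule floor_divide_of_nat_eq)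
    finally show "nat \<lceil>real (7 * 8 ^ (m - 1) - 7 * 2 ^ t) / 8 ^ i\<rceil>
                 = 7 * 8 ^ (m - 1 - i) - (7 * 2 ^ t) div 8 ^ i"
      using le by (metis nat_int of_nat_diff)
  qed
  have "(\<Sum>i<m. nat \<lceil>real (7 * 8 ^ (m - 1) - 7 * 2 ^ t) / 8 ^ i\<rceil>)
        = (\<Sum>i<m. 7 * 8 ^ (m - 1 - i) - (7 * 2 ^ t) div 8 ^ i)"
    using summand by simp
  also have "\<dots> = (\<Sum>i<m. 7 * 8 ^ (m - 1 - i)) - (\<Sum>i<m. (7 * 2 ^ t) div 8 ^ i)"
    by (rule sum_subtractf_nat) (use le in simp)
  also have "(\<Sum>i<m. 7 * 8 ^ (m - 1 - i)) = (8 ^ m - 1 :: nat)"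
    using sum.nat_diff_reindex[of "\<lambda>i. 7 * (8::nat) ^ i" m] sum_geometric8[of m] by simp
  also have "(\<Sum>i<m. (7 * 2 ^ t) div 8 ^ i) = (8 * 2 ^ t - 1 :: nat)"
  proof (rule sum_div_pow8)
    have "7 * 2 ^ t < 8 * (2::nat) ^ t"
      by simp
    also have "\<dots> \<le> 8 ^ (m - 1)"
      by (rule small)
    also have "\<dots> < 8 ^ m"
      unfolding m by simp
    finally show "7 * 2 ^ t < (8::nat) ^ m" .
  qed
  finally show ?thesis
    using small m by simp
qed

section \<open>The codes C_P\<close>

lemma fvec_eq_words: "fvec m = words {1..m}"
  unfolding fvec_def words_def ..

lemma words_diff: "v \<in> words I \<Longrightarrow> w \<in> words I \<Longrightarrow> v - w \<in> words I"
  and words_add: "v \<in> words I \<Longrightarrow> w \<in> words I \<Longrightarrow> v + w \<in> words I"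
  and words_fscale: "v \<in> words I \<Longrightarrow> fscale a v \<in> words I"
  unfolding words_def fscale_def by auto

lemma dotp_diff_right: "dotp m v (x - y) = dotp m v x - dotp m v y"
  unfolding dotp_def by (simp add: right_diff_distrib sum_subtractf)

lemma indicator_in_fvec: "S \<subseteq> {1..m} \<Longrightarrow> indicator S \<in> fvec m"
  unfolding fvec_def indicator_def by auto

lemma indicator_ne_0:
  assumes "S \<noteq> {}"
  shows "(indicator S :: nat \<Rightarrow> 'a::field) \<noteq> 0"
proof -
  obtain x where "x \<in> S"
    using assms by blast
  then have "(indicator S :: nat \<Rightarrow> 'a) x \<noteq> 0"
    by simp
  then show ?thesis
    by auto
qed

lemma dotp_indicator:
  assumes "S \<subseteq> {1..m}"
  shows "dotp m (indicator S) d = sum d S"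
proof -
  have "dotp m (indicator S) d = (\<Sum>i\<in>{1..m}. if i \<in> S then d i else 0)"
    unfolding dotp_def by (intro sum.cong) auto
  also have "\<dots> = sum d S"
    using assms by (simp add: sum.inter_restrict[symmetric] Int_absorb1)
  finally show ?thesis .
qed

definition codeword :: "nat \<Rightarrow> (nat \<Rightarrow> 'a::field) set \<Rightarrow> (nat \<Rightarrow> 'a) \<Rightarrow> (nat \<Rightarrow> 'a) \<Rightarrow> 'a"
  where
  "codeword m P v = (\<lambda>d. if d \<in> P then dotp m v d else 0)"

lemma codeP_eq_image: "codeP m P = codeword m P ` fvec m"
  unfolding codeP_def codeword_def by auto

lemma codeword_diff: "codeword m P (v - w) = codeword m P v - codeword m P w"
  and codeword_add: "codeword m P (v + w) = codeword m P v + codeword m P w"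
  and codeword_fscale: "codeword m P (fscale a v) = fscale a (codeword m P v)"
  unfolding codeword_def dotp_def fscale_def
  by (auto simp: fun_eq_iff algebra_simps sum_subtractf sum.distrib sum_distrib_left)

lemma codeword_0: "codeword m P 0 = 0"
  using codeword_diff[of m P 0 0] by simp

lemma is_linear_code_codeP:
  assumes "finite P"
  shows "is_linear_code P (codeP m P)"
  unfolding is_linear_code_def fvs.subspace_def codeP_eq_image
proof (intro conjI ballI allI)
  show "codeword m P ` fvec m \<subseteq> words P"
    unfolding codeword_def words_def by auto
  show "0 \<in> codeword m P ` fvec m"
    by (rule image_eqI[of _ _ 0]) (simp_all add: codeword_0 fvec_def)
  show "x + y \<in> codeword m P ` fvec m"
    if "x \<in> codeword m P ` fvec m" "y \<in> codeword m P ` fvec m" for x y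
  proof -
    from that obtain v w where "v \<in> words {1..m}" "w \<in> words {1..m}"
      and "x = codeword m P v" "y = codeword m P w"
      unfolding fvec_eq_words by blast
    then show ?thesis
      unfolding fvec_eq_words by (intro image_eqI[of _ _ "v + w"]) (simp_all add: codeword_add words_add)
  qed
  show "fscale c x \<in> codeword m P ` fvec m" if "x \<in> codeword m P ` fvec m" for c x
  proof -
    from that obtain v where "v \<in> words {1..m}" and "x = codeword m P v"
      unfolding fvec_eq_words by blast
    then show ?thesis
      unfolding fvec_eq_words
      by (intro image_eqI[of _ _ "fscale c v"]) (simp_all add: codeword_fscale words_fscale)
  qed
qed (fact assms)

lemma hwt_codeword: "hwt P (codeword m P v) = card {d\<in>P. dotp m v d \<noteq> 0}"
  unfolding hwt_def supp_def codeword_def by (rule arg_cong[where f=card]) auto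

lemma card_dotp_eq_0:
  fixes v :: "nat \<Rightarrow> 'a::{field,finite}"
  assumes v: "v \<in> fvec m" "v \<noteq> 0"
  shows "card {d\<in>fvec m. dotp m v d = 0} = card (UNIV :: 'a set) ^ (m - 1)"
proof -
  obtain j where j: "v j \<noteq> 0"
    using v(2) by (auto simp: fun_eq_iff)
  then have jm: "j \<in> {1..m}"
    using v(1) unfolding fvec_def by blast
  have "x \<in> dotp m v ` fvec m" for x
  proof
    show "(\<lambda>k. if k = j then x / v j else 0) \<in> fvec m"
      using jm unfolding fvec_def by auto
    show "x = dotp m v (\<lambda>k. if k = j then x / v j else 0)"
      using j jm unfolding dotp_def by (simp add: if_distrib cong: if_cong)
  qed
  then have "dotp m v ` fvec m = UNIV"
    by blast
  moreover have "card (fvec m :: (nat \<Rightarrow> 'a) set)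
      = card (dotp m v ` fvec m) * card {d\<in>fvec m. dotp m v d = 0}"
    unfolding fvec_eq_words
    by (rule card_eq_card_image_mult_card_kernel[of "words {1..m}" "dotp m v"])
      (simp_all add: finite_words words_diff dotp_diff_right)
  ultimately have "card (UNIV :: 'a set) ^ m = card (UNIV :: 'a set) * card {d\<in>fvec m. dotp m v d = 0}"
    using card_words[of "{1..m}", where 'a='a] unfolding fvec_eq_words by simp
  moreover have "card (UNIV :: 'a set) ^ m = card (UNIV :: 'a set) * card (UNIV :: 'a set) ^ (m - 1)"
    using jm by (simp flip: power_Suc)
  ultimately show ?thesis
    using card_UNIV_field_ge_2[where 'a='a] by simp
qed

lemma hwt_codeword_Diff:
  fixes v :: "nat \<Rightarrow> 'a::{field,finite}"
  assumes P: "P \<subseteq> fvec m" and v: "v \<in> fvec m" "v \<noteq> 0"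
  shows "hwt (fvec m - P) (codeword m (fvec m - P) v) + card {d\<in>P. dotp m v d \<noteq> 0}
           = (card (UNIV :: 'a set) - 1) * card (UNIV :: 'a set) ^ (m - 1)"
proof -
  let ?q = "card (UNIV :: 'a set)" and ?K = "{d\<in>fvec m. dotp m v d = 0}"
  have fin: "finite (fvec m :: (nat \<Rightarrow> 'a) set)"
    unfolding fvec_eq_words by (simp add: finite_words)
  have "m \<noteq> 0"
    using v by (auto simp: fvec_def fun_eq_iff)
  then have "card (fvec m :: (nat \<Rightarrow> 'a) set) = ?q * ?q ^ (m - 1)"
    using card_words[of "{1..m}", where 'a='a] unfolding fvec_eq_words by (simp flip: power_Suc)
  then have "card (fvec m - ?K) = (?q - 1) * ?q ^ (m - 1)"
    using card_Diff_subset[of ?K "fvec m"] fin card_dotp_eq_0[OF v] by (simp add: diff_mult_distrib)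
  moreover have "fvec m - ?K = {d\<in>fvec m - P. dotp m v d \<noteq> 0} \<union> {d\<in>P. dotp m v d \<noteq> 0}"
    using P by blast
  moreover have "card ({d\<in>fvec m - P. dotp m v d \<noteq> 0} \<union> {d\<in>P. dotp m v d \<noteq> 0})
      = card {d\<in>fvec m - P. dotp m v d \<noteq> 0} + card {d\<in>P. dotp m v d \<noteq> 0}"
    using fin finite_subset[OF P fin] by (intro card_Un_disjoint) auto
  ultimately show ?thesis
    unfolding hwt_codeword by simp
qed

lemma code_dim_codeP:
  fixes P :: "(nat \<Rightarrow> 'a::{field,finite}) set"
  assumes fin: "finite P" and nonzero: "\<And>v. v \<in> fvec m \<Longrightarrow> v \<noteq> 0 \<Longrightarrow> codeword m P v \<noteq> 0"
  shows "code_dim (codeP m P) = m"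
proof -
  let ?q = "card (UNIV :: 'a set)"
  have "inj_on (codeword m P) (fvec m)"
  proof (rule inj_onI)
    fix v w assume vw: "v \<in> fvec m" "w \<in> fvec m" "codeword m P v = codeword m P w"
    then have "v - w \<in> fvec m"
      using words_diff unfolding fvec_eq_words by blast
    moreover have "codeword m P (v - w) = 0"
      using vw(3) by (simp add: codeword_diff)
    ultimately show "v = w"
      using nonzero by fastforce
  qed
  then have "card (codeP m P) = card (fvec m :: (nat \<Rightarrow> 'a) set)"
    unfolding codeP_eq_image by (rule card_image)
  also have "\<dots> = ?q ^ m"
    using card_words[of "{1..m}", where 'a='a] unfolding fvec_eq_words by simp
  finally have "?q ^ code_dim (codeP m P) = ?q ^ m"
    using card_linear_code[OF is_linear_code_codeP[OF fin]] by simp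
  then show ?thesis
    using card_UNIV_field_ge_2[where 'a='a] by (simp add: power_inject_exp)
qed

section \<open>Binary vectors and the defining set\<close>

lemma Delta_values: "w \<in> Delta m X \<Longrightarrow> w i \<in> {0, 1}"
  and Delta_outside: "w \<in> Delta m X \<Longrightarrow> i \<notin> X \<Longrightarrow> w i = 0"
  unfolding Delta_def by auto

lemma Delta_zero: "(\<lambda>_. 0) \<in> Delta m X"
  unfolding Delta_def fvec_def by simp

lemma Delta_single:
  "X \<subseteq> {1..m} \<Longrightarrow> l \<in> X \<Longrightarrow> a \<in> {0, 1} \<Longrightarrow> (\<lambda>k. if k = l then a else 0) \<in> Delta m X"
  unfolding Delta_def fvec_def by auto

lemma card_Delta:
  assumes "X \<subseteq> {1..m}"
  shows "card (Delta m X :: (nat \<Rightarrow> 'a::field) set) = 2 ^ card X"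
proof -
  have "bij_betw (\<lambda>w. restrict w X) (Delta m X :: (nat \<Rightarrow> 'a) set) (PiE X (\<lambda>_. {0, 1}))"
    by (rule bij_betw_byWitness[where f'="\<lambda>f i. if i \<in> X then f i else 0"])
      (use assms in \<open>auto simp: Delta_def fvec_def fun_eq_iff PiE_def Pi_iff extensional_def
        split: if_splits\<close>)
  moreover have "finite X"
    using assms finite_subset by blast
  ultimately show ?thesis
    by (simp add: bij_betw_same_card card_PiE numeral_2_eq_2)
qed

(* With arbitrary coefficients in place of 1, omega, omega^2 the sumset is symmetric under
   permuting the (coefficient, set) pairs, so the three cases of which two of L, M, N own a
   private coordinate reduce to a single lemma. *)
definition delta_comb ::
    "nat \<Rightarrow> 'a::field \<Rightarrow> 'a \<Rightarrow> 'a \<Rightarrow> nat set \<Rightarrow> nat set \<Rightarrow> nat set \<Rightarrow> (nat \<Rightarrow> 'a) set"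
  where "delta_comb m p q r X Y Z =
    {(\<lambda>i. p * a i + q * b i + r * c i) | a b c. a \<in> Delta m X \<and> b \<in> Delta m Y \<and> c \<in> Delta m Z}"

lemma delta_combI:
  "a \<in> Delta m X \<Longrightarrow> b \<in> Delta m Y \<Longrightarrow> c \<in> Delta m Z \<Longrightarrow>
    (\<lambda>i. p * a i + q * b i + r * c i) \<in> delta_comb m p q r X Y Z"
  unfolding delta_comb_def by blast

lemma sumset3_eq_delta_comb:
  "sumset3 \<omega> (Delta m X) (Delta m Y) (Delta m Z) = delta_comb m 1 \<omega> (\<omega> ^ 2) X Y Z"
  unfolding sumset3_def delta_comb_def by simp

lemma delta_comb_swap12: "delta_comb m p q r X Y Z = delta_comb m q p r Y X Z"
  and delta_comb_swap23: "delta_comb m p q r X Y Z = delta_comb m p r q X Z Y"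
  unfolding delta_comb_def by (auto simp: algebra_simps)

lemma delta_comb_pair_values:
  assumes sub: "X \<subseteq> {1..m}" "Y \<subseteq> {1..m}"
    and i: "i \<in> X - (Y \<union> Z)" and j: "j \<in> Y - (X \<union> Z)"
  shows "(\<lambda>d. (d i, d j)) ` delta_comb m p q r X Y Z = {0, p} \<times> {0, q}"
proof
  show "(\<lambda>d. (d i, d j)) ` delta_comb m p q r X Y Z \<subseteq> {0, p} \<times> {0, q}"
  proof clarify
    fix d assume "d \<in> delta_comb m p q r X Y Z"
    then obtain a b c where d: "d = (\<lambda>i. p * a i + q * b i + r * c i)"
      and abc: "a \<in> Delta m X" "b \<in> Delta m Y" "c \<in> Delta m Z"
      unfolding delta_comb_def by blast
    have "a i \<in> {0, 1}" "b j \<in> {0, 1}"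
      using abc Delta_values by blast+
    moreover have "b i = 0" "c i = 0" "a j = 0" "c j = 0"
      using abc i j Delta_outside by blast+
    ultimately show "d i \<in> {0, p} \<and> d j \<in> {0, q}"
      unfolding d by auto
  qed
  show "{0, p} \<times> {0, q} \<subseteq> (\<lambda>d. (d i, d j)) ` delta_comb m p q r X Y Z"
  proof clarify
    fix x y assume xy: "x \<in> {0, p}" "y \<in> {0, q}"
    obtain \<alpha> \<beta> where \<alpha>\<beta>: "\<alpha> \<in> {0, 1}" "\<beta> \<in> {0, 1}" "x = p * \<alpha>" "y = q * \<beta>"
      by (rule that[of "if x = p then 1 else 0" "if y = q then 1 else 0"]) (use xy in auto)
    have "(\<lambda>k. p * (if k = i then \<alpha> else 0) + q * (if k = j then \<beta> else 0) + r * 0)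
            \<in> delta_comb m p q r X Y Z"
      using delta_combI[OF Delta_single[OF sub(1) _ \<alpha>\<beta>(1)] Delta_single[OF sub(2) _ \<alpha>\<beta>(2)] Delta_zero]
        i j by blast
    then show "(x, y) \<in> (\<lambda>d. (d i, d j)) ` delta_comb m p q r X Y Z"
      by (rule rev_image_eqI) (use i j \<alpha>\<beta> in auto)
  qed
qed

locale gf8 =
  fixes \<omega> :: "'a::{field,finite}"
  assumes card_UNIV: "card (UNIV :: 'a set) = 8"
    and root: "\<omega> ^ 3 + \<omega> + 1 = 0"
begin

lemma diff_eq_add: "x - y = x + y" for x y :: 'a
  using minus_CHAR_2[OF CHAR_eq_2_if_card_8[OF card_UNIV]] .

lemma add_eq_0_iff_eq: "x + y = 0 \<longleftrightarrow> x = y" for x y :: 'a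
  by (metis diff_eq_add right_minus_eq)

lemma add_self: "x + x = 0" for x :: 'a
  by (simp only: add_eq_0_iff_eq)

lemma omega_ne_0: "\<omega> \<noteq> 0"
  using root by auto

lemma omega_ne_1: "\<omega> \<noteq> 1"
  using root add_eq_0_iff_eq[of 1 1] by auto

lemma omega_square_ne_1: "\<omega> ^ 2 \<noteq> 1"
proof
  assume "\<omega> ^ 2 = 1"
  then have "\<omega> ^ 3 = \<omega>"
    by (metis power_Suc numeral_3_eq_3 numeral_2_eq_2 mult.right_neutral)
  then show False
    using root add_self[of \<omega>] by (metis add_0_left zero_neq_one)
qed

lemma omega_square_ne_omega: "\<omega> ^ 2 \<noteq> \<omega>"
  using omega_ne_0 omega_ne_1 by (simp add: power2_eq_square)

lemma one_plus_omega_plus_square_ne_0: "1 + \<omega> + \<omega> ^ 2 \<noteq> 0"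
proof
  assume "1 + \<omega> + \<omega> ^ 2 = 0"
  then have "1 + \<omega> = \<omega> ^ 2"
    by (simp only: add_eq_0_iff_eq)
  then have "\<omega> ^ 2 = 1 + \<omega>"
    by (rule sym)
  have "\<omega> ^ 3 = \<omega> * \<omega> ^ 2"
    by (simp add: power3_eq_cube power2_eq_square)
  also have "\<dots> = \<omega> + \<omega> * \<omega>"
    unfolding \<open>\<omega> ^ 2 = 1 + \<omega>\<close> by (simp add: distrib_left)
  also have "\<dots> = 1 + (\<omega> + \<omega>)"
    using \<open>\<omega> ^ 2 = 1 + \<omega>\<close> by (simp add: power2_eq_square add.assoc)
  finally have "\<omega> ^ 3 = 1"
    by (simp add: add_self)
  then have "\<omega> + (1 + 1) = 0"
    using root by (simp add: add_ac)
  then show False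
    using omega_ne_0 by (simp only: add_self add_0_right)
qed

lemma binary_comb_eq_0:
  assumes "a \<in> {0, 1}" "b \<in> {0, 1}" "c \<in> {0, 1}" and "a + \<omega> * b + \<omega> ^ 2 * c = 0"
  shows "a = 0 \<and> b = 0 \<and> c = 0"
  using assms omega_ne_0 omega_ne_1 omega_square_ne_1 omega_square_ne_omega
    one_plus_omega_plus_square_ne_0 add_eq_0_iff_eq[of 1 \<omega>] add_eq_0_iff_eq[of 1 "\<omega> ^ 2"]
    add_eq_0_iff_eq[of \<omega> "\<omega> ^ 2"]
  by auto

lemma binary_diff: "x \<in> {0, 1} \<Longrightarrow> y \<in> {0, 1} \<Longrightarrow> x - y \<in> {0, 1}" for x y :: 'a
  by (auto simp: diff_eq_add add_self)

lemma binary_comb_inj: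
  assumes "a \<in> {0, 1}" "b \<in> {0, 1}" "c \<in> {0, 1}" "a' \<in> {0, 1}" "b' \<in> {0, 1}" "c' \<in> {0, 1}"
    and "a + \<omega> * b + \<omega> ^ 2 * c = a' + \<omega> * b' + \<omega> ^ 2 * c'"
  shows "a = a' \<and> b = b' \<and> c = c'"
proof -
  have "(a - a') + \<omega> * (b - b') + \<omega> ^ 2 * (c - c') = 0"
    using assms(7) by (simp add: algebra_simps)
  with binary_comb_eq_0 binary_diff assms(1-6) show ?thesis
    by (metis right_minus_eq)
qed

lemma binary_comb_surj: "\<exists>a\<in>{0, 1}. \<exists>b\<in>{0, 1}. \<exists>c\<in>{0, 1}. x = a + \<omega> * b + \<omega> ^ 2 * c"
proof -
  let ?comb = "\<lambda>(a, b, c). a + \<omega> * b + \<omega> ^ 2 * c" and ?B = "{0, 1 :: 'a}"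
  have "inj_on ?comb (?B \<times> ?B \<times> ?B)"
  proof (rule inj_onI)
    fix x y assume x: "x \<in> ?B \<times> ?B \<times> ?B" and y: "y \<in> ?B \<times> ?B \<times> ?B" and eq: "?comb x = ?comb y"
    obtain a b c a' b' c' where xy: "x = (a, b, c)" "y = (a', b', c')"
      by (cases x, cases y) auto
    have "a \<in> ?B" "b \<in> ?B" "c \<in> ?B" "a' \<in> ?B" "b' \<in> ?B" "c' \<in> ?B"
      using x y unfolding xy by (simp_all only: mem_Times_iff fst_conv snd_conv)
    moreover have "a + \<omega> * b + \<omega> ^ 2 * c = a' + \<omega> * b' + \<omega> ^ 2 * c'"
      using eq unfolding xy by simp
    ultimately have "a = a' \<and> b = b' \<and> c = c'"
      by (rule binary_comb_inj)
    then show "x = y"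
      unfolding xy by simp
  qed
  then have "card (?comb ` (?B \<times> ?B \<times> ?B)) = card (UNIV :: 'a set)"
    unfolding card_UNIV by (simp add: card_image card_cartesian_product)
  then have "?comb ` (?B \<times> ?B \<times> ?B) = UNIV"
    by (intro card_subset_eq) simp_all
  then obtain t where t: "t \<in> ?B \<times> ?B \<times> ?B" "x = ?comb t"
    by blast
  obtain a b c where "t = (a, b, c)"
    by (cases t) auto
  with t show ?thesis
    by (simp only: mem_Times_iff fst_conv snd_conv case_prod_conv) blast
qed

lemma Delta_diff:
  fixes a b :: "nat \<Rightarrow> 'a"
  assumes "a \<in> Delta m X" "b \<in> Delta m X"
  shows "a - b \<in> Delta m X"
proof -
  have "(a - b) i \<in> {0, 1}" for i
    using binary_diff[OF Delta_values[OF assms(1)] Delta_values[OF assms(2)]] by simp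
  moreover have "{i. (a - b) i \<noteq> 0} \<subseteq> X"
  proof
    fix i assume "i \<in> {i. (a - b) i \<noteq> 0}"
    then show "i \<in> X"
      using Delta_outside[OF assms(1), of i] Delta_outside[OF assms(2), of i] by (cases "i \<in> X") auto
  qed
  moreover have "a - b \<in> fvec m"
    using assms words_diff unfolding Delta_def fvec_eq_words by blast
  ultimately show ?thesis
    unfolding Delta_def by blast
qed

end

locale gf8_sumset = gf8 +
  fixes m :: nat and L M N :: "nat set"
  assumes subsets: "L \<union> M \<union> N \<subseteq> {1..m}"
begin

abbreviation "D \<equiv> sumset3 \<omega> (Delta m L) (Delta m M) (Delta m N)"

abbreviation "Dc \<equiv> fvec m - D"

abbreviation "s \<equiv> card L + card M + card N"

lemma D_subset: "D \<subseteq> fvec m"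
  unfolding sumset3_def Delta_def fvec_def by auto

lemma finite_D: "finite D"
  using D_subset finite_words finite_subset unfolding fvec_eq_words by blast

lemma D_diff:
  assumes "x \<in> D" "y \<in> D"
  shows "x - y \<in> D"
proof -
  obtain a b c a' b' c' where
    x: "x = (\<lambda>i. a i + \<omega> * b i + \<omega> ^ 2 * c i)" "a \<in> Delta m L" "b \<in> Delta m M" "c \<in> Delta m N" and
    y: "y = (\<lambda>i. a' i + \<omega> * b' i + \<omega> ^ 2 * c' i)" "a' \<in> Delta m L" "b' \<in> Delta m M" "c' \<in> Delta m N"
    using assms unfolding sumset3_def by blast
  then have "x - y = (\<lambda>i. (a - a') i + \<omega> * (b - b') i + \<omega> ^ 2 * (c - c') i)"
    by (simp add: fun_eq_iff algebra_simps)
  then show ?thesis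
    unfolding sumset3_def using Delta_diff x y by blast
qed

lemma D_outside:
  assumes "d \<in> D" "j \<notin> L \<union> M \<union> N"
  shows "d j = 0"
proof -
  obtain a b c where "d = (\<lambda>i. a i + \<omega> * b i + \<omega> ^ 2 * c i)"
    and "a \<in> Delta m L" "b \<in> Delta m M" "c \<in> Delta m N"
    using assms(1) unfolding sumset3_def by blast
  with assms(2) show ?thesis
    using Delta_outside[of a m L j] Delta_outside[of b m M j] Delta_outside[of c m N j] by simp
qed

lemma card_D: "card D = 2 ^ s"
proof -
  let ?comb = "\<lambda>(a, b, c) i. a i + \<omega> * b i + \<omega> ^ 2 * c i"
    and ?Deltas = "Delta m L \<times> Delta m M \<times> Delta m N :: ((nat \<Rightarrow> 'a) \<times> _) set"
  have "D = ?comb ` ?Deltas"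
  proof
    show "D \<subseteq> ?comb ` ?Deltas"
    proof
      fix d assume "d \<in> D"
      then obtain a b c where "d = (\<lambda>i. a i + \<omega> * b i + \<omega> ^ 2 * c i)"
        and "a \<in> Delta m L" "b \<in> Delta m M" "c \<in> Delta m N"
        unfolding sumset3_def by blast
      then show "d \<in> ?comb ` ?Deltas"
        by (intro image_eqI[of _ _ "(a, b, c)"]) auto
    qed
    show "?comb ` ?Deltas \<subseteq> D"
      unfolding sumset3_def by auto
  qed
  moreover have "inj_on ?comb ?Deltas"
  proof (rule inj_onI)
    fix x y assume x: "x \<in> ?Deltas" and y: "y \<in> ?Deltas" and "?comb x = ?comb y"
    obtain a b c a' b' c' where xy: "x = (a, b, c)" "y = (a', b', c')"
      by (cases x, cases y) auto
    note abc = x[unfolded xy] and abc' = y[unfolded xy] and eq = \<open>?comb x = ?comb y\<close>[unfolded xy]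
    have "a i = a' i \<and> b i = b' i \<and> c i = c' i" for i
    proof (rule binary_comb_inj)
      show "a i \<in> {0, 1}" "b i \<in> {0, 1}" "c i \<in> {0, 1}" "a' i \<in> {0, 1}" "b' i \<in> {0, 1}" "c' i \<in> {0, 1}"
        using abc abc' Delta_values by (simp_all only: mem_Times_iff fst_conv snd_conv) blast+
      show "a i + \<omega> * b i + \<omega> ^ 2 * c i = a' i + \<omega> * b' i + \<omega> ^ 2 * c' i"
        using fun_cong[OF eq, of i] by simp
    qed
    then show "x = y"
      unfolding xy by (simp add: fun_eq_iff)
  qed
  ultimately have "card D = card (Delta m L :: (nat \<Rightarrow> 'a) set) * card (Delta m M :: (nat \<Rightarrow> 'a) set)
      * card (Delta m N :: (nat \<Rightarrow> 'a) set)"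
    by (simp add: card_image card_cartesian_product)
  then show ?thesis
    using subsets card_Delta[of L m, where 'a='a] card_Delta[of M m, where 'a='a]
      card_Delta[of N m, where 'a='a]
    by (simp add: power_add)
qed

lemma D_memI:
  "a \<in> Delta m L \<Longrightarrow> b \<in> Delta m M \<Longrightarrow> c \<in> Delta m N \<Longrightarrow>
    (\<lambda>i. a i + \<omega> * b i + \<omega> ^ 2 * c i) \<in> D"
  unfolding sumset3_def by blast

lemma zero_in_D: "0 \<in> D"
  using D_memI[OF Delta_zero Delta_zero Delta_zero] by (simp add: zero_fun_def)

lemma card_D_eq_image_mult_kernel: "card D = card (dotp m v ` D) * card {d\<in>D. dotp m v d = 0}"
  using finite_D D_diff dotp_diff_right by (intro card_eq_card_image_mult_card_kernel) auto

lemma card_dotp_image: "\<exists>i\<le>3. card (dotp m v ` D) = 2 ^ i"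
proof -
  have "card (dotp m v ` D) dvd 2 ^ s"
    using card_D_eq_image_mult_kernel[of v] unfolding card_D by (rule dvdI)
  then obtain i where i: "card (dotp m v ` D) = 2 ^ i"
    using divides_primepow_nat[OF two_is_prime_nat] by auto
  have "card (dotp m v ` D) \<le> card (UNIV :: 'a set)"
    by (rule card_mono) auto
  then have "(2::nat) ^ i \<le> 2 ^ 3"
    using i card_UNIV by simp
  then show ?thesis
    using i power_le_imp_le_exp[of 2 i 3] by auto
qed

lemma hwt_codeword_Dc:
  assumes v: "v \<in> fvec m" "v \<noteq> 0" and i: "card (dotp m v ` D) = 2 ^ i"
  shows "hwt Dc (codeword m Dc v) + 2 ^ s = 7 * 2 ^ (3 * (m - 1)) + 2 ^ (s - i)"
proof -
  let ?K = "{d\<in>D. dotp m v d = 0}"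
  have s: "2 ^ s = 2 ^ i * card ?K"
    using card_D_eq_image_mult_kernel[of v] card_D i by simp
  have "(2::nat) ^ i \<le> 2 ^ s"
    using card_image_le[OF finite_D, of "dotp m v"] card_D i by simp
  then have "i \<le> s"
    using power_le_imp_le_exp[of 2 i s] by simp
  then have "2 ^ s = 2 ^ i * (2::nat) ^ (s - i)"
    by (simp flip: power_add)
  then have K: "card ?K = 2 ^ (s - i)"
    using s by simp
  have "{d\<in>D. dotp m v d \<noteq> 0} = D - ?K"
    by blast
  then have "card {d\<in>D. dotp m v d \<noteq> 0} = 2 ^ s - 2 ^ (s - i)"
    using card_Diff_subset[of ?K D] finite_D card_D K by simp
  moreover have "hwt Dc (codeword m Dc v) + card {d\<in>D. dotp m v d \<noteq> 0} = 7 * 2 ^ (3 * (m - 1))"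
    using hwt_codeword_Diff[OF D_subset v] card_UNIV by (simp add: power_mult)
  moreover have "(2::nat) ^ (s - i) \<le> 2 ^ s"
    by (simp add: power_increasing)
  ultimately show ?thesis
    by linarith
qed

end

section \<open>The code C_{D^c}\<close>

lemma card_strict_chain_4: "(a::nat) < b \<Longrightarrow> b < c \<Longrightarrow> c < d \<Longrightarrow> card {a, b, c, d} = 4"
  by simp

locale gf8_code = gf8_sumset +
  assumes nonempty: "L \<noteq> {}" "M \<noteq> {}" "N \<noteq> {}"
    and proper: "L \<union> M \<union> N \<subset> {1..m}"
    and two_exclusive: "(L - (M \<union> N) \<noteq> {} \<and> M - (N \<union> L) \<noteq> {}) \<or>
      (M - (N \<union> L) \<noteq> {} \<and> N - (L \<union> M) \<noteq> {}) \<or> (L - (M \<union> N) \<noteq> {} \<and> N - (L \<union> M) \<noteq> {})"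
begin

lemma s_bounds: "3 \<le> s" "s \<le> 3 * (m - 1)"
proof -
  have fin: "finite (L \<union> M \<union> N)"
    using subsets finite_subset by blast
  then have "card L \<ge> 1" "card M \<ge> 1" "card N \<ge> 1"
    using nonempty by (auto simp: Suc_le_eq card_gt_0_iff)
  then show "3 \<le> s"
    by simp
  have "card (L \<union> M \<union> N) < m"
    using psubset_card_mono[OF _ proper] by simp
  moreover have "card L \<le> card (L \<union> M \<union> N)" "card M \<le> card (L \<union> M \<union> N)"
    "card N \<le> card (L \<union> M \<union> N)"
    using fin by (auto intro: card_mono)
  ultimately show "s \<le> 3 * (m - 1)"
    by linarith
qed

lemma exclusive_coordinates:
  obtains p q i j where "p \<noteq> 0" "q \<noteq> 0" "p \<noteq> q" "i \<noteq> j" "i \<in> {1..m}" "j \<in> {1..m}"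
    "(\<lambda>d. (d i, d j)) ` D = {0, p} \<times> {0, q}"
proof -
  have sub: "L \<subseteq> {1..m}" "M \<subseteq> {1..m}" "N \<subseteq> {1..m}"
    using subsets by auto
  have D: "D = delta_comb m 1 \<omega> (\<omega> ^ 2) L M N"
    by (rule sumset3_eq_delta_comb)
  have ne: "\<omega> ^ 2 \<noteq> 0"
    using omega_ne_0 by simp
  from two_exclusive show thesis
  proof (elim disjE conjE)
    assume "L - (M \<union> N) \<noteq> {}" "M - (N \<union> L) \<noteq> {}"
    then obtain i j where ij: "i \<in> L - (M \<union> N)" "j \<in> M - (L \<union> N)"
      by blast
    have "i \<noteq> j" "i \<in> {1..m}" "j \<in> {1..m}"
      using ij sub by auto
    moreover have "(\<lambda>d. (d i, d j)) ` D = {0, 1} \<times> {0, \<omega>}"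
      unfolding D using sub(1,2) ij by (rule delta_comb_pair_values)
    ultimately show thesis
      by (rule that[OF one_neq_zero omega_ne_0 not_sym[OF omega_ne_1]])
  next
    assume "M - (N \<union> L) \<noteq> {}" "N - (L \<union> M) \<noteq> {}"
    then obtain i j where ij: "i \<in> M - (N \<union> L)" "j \<in> N - (M \<union> L)"
      by blast
    have "i \<noteq> j" "i \<in> {1..m}" "j \<in> {1..m}"
      using ij sub by auto
    moreover have "(\<lambda>d. (d i, d j)) ` D = {0, \<omega>} \<times> {0, \<omega> ^ 2}"
      unfolding D delta_comb_swap12[of m 1] delta_comb_swap23[of m \<omega> 1]
      using sub(2,3) ij by (rule delta_comb_pair_values)
    ultimately show thesis
      by (rule that[OF omega_ne_0 ne not_sym[OF omega_square_ne_omega]])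
  next
    assume "L - (M \<union> N) \<noteq> {}" "N - (L \<union> M) \<noteq> {}"
    then obtain i j where ij: "i \<in> L - (N \<union> M)" "j \<in> N - (L \<union> M)"
      by blast
    have "i \<noteq> j" "i \<in> {1..m}" "j \<in> {1..m}"
      using ij sub by auto
    moreover have "(\<lambda>d. (d i, d j)) ` D = {0, 1} \<times> {0, \<omega> ^ 2}"
      unfolding D delta_comb_swap23[of m 1 \<omega>]
      using sub(1,3) ij by (rule delta_comb_pair_values)
    ultimately show thesis
      by (rule that[OF one_neq_zero ne not_sym[OF omega_square_ne_1]])
  qed
qed

lemma exists_dotp_image_card_1: "\<exists>v\<in>fvec m. v \<noteq> 0 \<and> card (dotp m v ` D) = 1"
proof -
  obtain j where j: "j \<in> {1..m}" "j \<notin> L \<union> M \<union> N"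
    using proper by blast
  have "indicator {j} \<in> fvec m" "indicator {j} \<noteq> (0 :: nat \<Rightarrow> 'a)"
    using j by (simp_all add: indicator_in_fvec indicator_ne_0)
  moreover have "dotp m (indicator {j}) ` D = {0}"
  proof
    have eq: "dotp m (indicator {j}) d = d j" for d :: "nat \<Rightarrow> 'a"
      using j dotp_indicator[of "{j}" m d] by simp
    show "dotp m (indicator {j}) ` D \<subseteq> {0}"
      using eq D_outside j by auto
    show "{0} \<subseteq> dotp m (indicator {j}) ` D"
      using eq zero_in_D by (auto intro: rev_image_eqI)
  qed
  ultimately show ?thesis
    by auto
qed

lemma exists_dotp_image_card_2_4:
  "\<exists>v\<in>fvec m. v \<noteq> 0 \<and> card (dotp m v ` D) = 2"
  "\<exists>v\<in>fvec m. v \<noteq> 0 \<and> card (dotp m v ` D) = 4"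
proof -
  obtain p q i j where pq: "p \<noteq> 0" "q \<noteq> 0" "p \<noteq> q" and ij: "i \<noteq> j" "i \<in> {1..m}" "j \<in> {1..m}"
    and pair: "(\<lambda>d. (d i, d j)) ` D = {0, p} \<times> {0, q}"
    by (rule exclusive_coordinates)
  have "dotp m (indicator {i}) ` D = fst ` ((\<lambda>d. (d i, d j)) ` D)"
    using ij dotp_indicator[of "{i}" m, where 'a='a] by (simp add: image_image)
  then have "dotp m (indicator {i}) ` D = {0, p}"
    unfolding pair by simp
  then have "card (dotp m (indicator {i}) ` D) = 2"
    using pq by simp
  moreover have "indicator {i} \<in> fvec m" "indicator {i} \<noteq> (0 :: nat \<Rightarrow> 'a)"
    using ij by (simp_all add: indicator_in_fvec indicator_ne_0)
  ultimately show "\<exists>v\<in>fvec m. v \<noteq> 0 \<and> card (dotp m v ` D) = 2"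
    by blast
  have "dotp m (indicator {i, j}) ` D = (\<lambda>(x, y). x + y) ` ((\<lambda>d. (d i, d j)) ` D)"
    using ij dotp_indicator[of "{i, j}" m, where 'a='a] by (simp add: image_image)
  then have "dotp m (indicator {i, j}) ` D = {0, p, q, p + q}"
    unfolding pair by auto
  moreover have "p + q \<noteq> 0" "p + q \<noteq> p" "p + q \<noteq> q"
    using pq add_eq_0_iff_eq by auto
  ultimately have "card (dotp m (indicator {i, j}) ` D) = 4"
    using pq by simp
  moreover have "indicator {i, j} \<in> fvec m" "indicator {i, j} \<noteq> (0 :: nat \<Rightarrow> 'a)"
    using ij by (simp_all add: indicator_in_fvec indicator_ne_0)
  ultimately show "\<exists>v\<in>fvec m. v \<noteq> 0 \<and> card (dotp m v ` D) = 4"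
    by blast
qed

lemma exists_dotp_image_card_8: "\<exists>v\<in>fvec m. v \<noteq> 0 \<and> card (dotp m v ` D) = 8"
proof -
  let ?U = "L \<union> M \<union> N"
  obtain l n n' where l: "l \<in> L" "n \<in> M" "n' \<in> N"
    using nonempty by blast
  have sub: "L \<subseteq> {1..m}" "M \<subseteq> {1..m}" "N \<subseteq> {1..m}"
    using subsets by auto
  have "x \<in> dotp m (indicator ?U) ` D" for x
  proof -
    obtain a b c where abc: "a \<in> {0, 1}" "b \<in> {0, 1}" "c \<in> {0, 1}" "x = a + \<omega> * b + \<omega> ^ 2 * c"
      using binary_comb_surj by blast
    let ?d = "\<lambda>k. (if k = l then a else 0) + \<omega> * (if k = n then b else 0) + \<omega> ^ 2 * (if k = n' then c else 0)"
    have "?d \<in> D"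
      using D_memI[OF Delta_single[OF sub(1) l(1) abc(1)] Delta_single[OF sub(2) l(2) abc(2)]
          Delta_single[OF sub(3) l(3) abc(3)]] .
    moreover have "dotp m (indicator ?U) ?d = x"
    proof -
      have "dotp m (indicator ?U) ?d = sum ?d ?U"
        by (rule dotp_indicator[OF subsets])
      also have "\<dots> = (\<Sum>k\<in>?U. if k = l then a else 0) + \<omega> * (\<Sum>k\<in>?U. if k = n then b else 0)
          + \<omega> ^ 2 * (\<Sum>k\<in>?U. if k = n' then c else 0)"
        by (simp add: sum.distrib sum_distrib_left)
      also have "\<dots> = x"
        using l abc(4) finite_subset[OF subsets] by simp
      finally show ?thesis .
    qed
    ultimately show ?thesis
      by blast
  qed
  then have "dotp m (indicator ?U) ` D = UNIV"
    by blast
  then have "card (dotp m (indicator ?U) ` D) = 8"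
    using card_UNIV by simp
  moreover have "indicator ?U \<in> fvec m"
    using subsets by (rule indicator_in_fvec)
  moreover have "indicator ?U \<noteq> (0 :: nat \<Rightarrow> 'a)"
    using l by (intro indicator_ne_0) blast
  ultimately show ?thesis
    by blast
qed

lemma exists_dotp_image_card:
  assumes "i \<le> 3"
  shows "\<exists>v\<in>fvec m. v \<noteq> 0 \<and> card (dotp m v ` D) = 2 ^ i"
proof -
  have "i = 0 \<or> i = 1 \<or> i = 2 \<or> i = 3"
    using assms by linarith
  then show ?thesis
    using exists_dotp_image_card_1 exists_dotp_image_card_2_4 exists_dotp_image_card_8 by auto
qed

lemma two_pow_s: "2 ^ s = 8 * (2::nat) ^ (s - 3)"
proof -
  have "(2::nat) ^ s = 2 ^ (3 + (s - 3))"
    using s_bounds(1) by simp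
  then show ?thesis
    by (simp add: power_add)
qed

lemma two_pow_s_le: "8 * (2::nat) ^ (s - 3) \<le> 2 ^ (3 * (m - 1))"
  using s_bounds(2) two_pow_s power_increasing[of s "3 * (m - 1)" "2::nat"] by simp

lemma weights_less:
  "7 * 2 ^ (3 * (m - 1)) - 7 * 2 ^ (s - 3) < 7 * 2 ^ (3 * (m - 1)) - 6 * (2::nat) ^ (s - 3)"
  "7 * 2 ^ (3 * (m - 1)) - 6 * 2 ^ (s - 3) < 7 * 2 ^ (3 * (m - 1)) - 4 * (2::nat) ^ (s - 3)"
  "7 * 2 ^ (3 * (m - 1)) - 4 * 2 ^ (s - 3) < 7 * (2::nat) ^ (3 * (m - 1))"
  "0 < 7 * 2 ^ (3 * (m - 1)) - 7 * (2::nat) ^ (s - 3)"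
proof -
  have "0 < (2::nat) ^ (s - 3)"
    by simp
  then show "7 * 2 ^ (3 * (m - 1)) - 7 * 2 ^ (s - 3) < 7 * 2 ^ (3 * (m - 1)) - 6 * (2::nat) ^ (s - 3)"
    "7 * 2 ^ (3 * (m - 1)) - 6 * 2 ^ (s - 3) < 7 * 2 ^ (3 * (m - 1)) - 4 * (2::nat) ^ (s - 3)"
    "7 * 2 ^ (3 * (m - 1)) - 4 * 2 ^ (s - 3) < 7 * (2::nat) ^ (3 * (m - 1))"
    "0 < 7 * 2 ^ (3 * (m - 1)) - 7 * (2::nat) ^ (s - 3)"
    using two_pow_s_le by linarith+
qed

lemma hwt_codeword_eq:
  assumes "v \<in> fvec m" "v \<noteq> 0" "card (dotp m v ` D) = 2 ^ i" "i \<le> 3"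
  shows "hwt Dc (codeword m Dc v) = 7 * 2 ^ (3 * (m - 1)) - (8 - 2 ^ (3 - i)) * 2 ^ (s - 3)"
proof -
  have "s - i = (3 - i) + (s - 3)"
    using s_bounds(1) assms(4) by simp
  then have "2 ^ (s - i) = 2 ^ (3 - i) * (2::nat) ^ (s - 3)"
    by (simp add: power_add)
  moreover have "(2::nat) ^ (3 - i) * 2 ^ (s - 3) \<le> 8 * 2 ^ (s - 3)"
    using power_increasing[of "3 - i" 3 "2::nat"] by simp
  ultimately show ?thesis
    using hwt_codeword_Dc[OF assms(1-3)] two_pow_s by (simp add: diff_mult_distrib) linarith
qed

lemma codeword_Dc_ne_0:
  assumes "v \<in> fvec m" "v \<noteq> 0"
  shows "codeword m Dc v \<noteq> 0"
proof
  assume "codeword m Dc v = 0"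
  then have "hwt Dc (codeword m Dc v) = 0"
    unfolding hwt_def supp_def by simp
  obtain i where i: "i \<le> 3" "card (dotp m v ` D) = 2 ^ i"
    using card_dotp_image by blast
  have "(1::nat) \<le> 2 ^ (3 - i)"
    by simp
  then have "(8 - 2 ^ (3 - i)) * (2::nat) ^ (s - 3) \<le> 7 * 2 ^ (s - 3)"
    by (intro mult_right_mono) linarith+
  moreover have "hwt Dc (codeword m Dc v) = 7 * 2 ^ (3 * (m - 1)) - (8 - 2 ^ (3 - i)) * 2 ^ (s - 3)"
    using hwt_codeword_eq[OF assms i(2,1)] .
  ultimately show False
    using \<open>hwt Dc (codeword m Dc v) = 0\<close> weights_less(4) by linarith
qed

lemma nonzero_weights_Dc:
  "nonzero_weights Dc (codeP m Dc) =
    {7 * 2 ^ (3 * (m - 1)) - 7 * 2 ^ (s - 3), 7 * 2 ^ (3 * (m - 1)) - 6 * 2 ^ (s - 3),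
     7 * 2 ^ (3 * (m - 1)) - 4 * 2 ^ (s - 3), 7 * 2 ^ (3 * (m - 1))}"
proof -
  let ?w = "\<lambda>i::nat. 7 * 2 ^ (3 * (m - 1)) - (8 - 2 ^ (3 - i)) * (2::nat) ^ (s - 3)"
  have "nonzero_weights Dc (codeP m Dc) = ?w ` {..3}"
  proof (intro equalityI subsetI)
    fix w assume "w \<in> nonzero_weights Dc (codeP m Dc)"
    then obtain v where v: "v \<in> fvec m" "codeword m Dc v \<noteq> 0" "w = hwt Dc (codeword m Dc v)"
      unfolding nonzero_weights_def codeP_eq_image by auto
    then have "v \<noteq> 0"
      using codeword_0 by auto
    moreover obtain i where "i \<le> 3" "card (dotp m v ` D) = 2 ^ i"
      using card_dotp_image by blast
    ultimately show "w \<in> ?w ` {..3}"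
      using hwt_codeword_eq v by auto
  next
    fix w assume "w \<in> ?w ` {..3}"
    then obtain i where i: "i \<le> 3" "w = ?w i"
      by auto
    then obtain v where v: "v \<in> fvec m" "v \<noteq> 0" "card (dotp m v ` D) = 2 ^ i"
      using exists_dotp_image_card by blast
    then have "w = hwt Dc (codeword m Dc v)"
      using hwt_codeword_eq i by simp
    then show "w \<in> nonzero_weights Dc (codeP m Dc)"
      unfolding nonzero_weights_def codeP_eq_image using v codeword_Dc_ne_0 by blast
  qed
  also have "{..3::nat} = {0, 1, 2, 3}"
    by auto
  finally show ?thesis
    by auto
qed

lemma finite_Dc: "finite Dc"
  using finite_words unfolding fvec_eq_words by blast

lemma linear_code_Dc: "is_linear_code Dc (codeP m Dc)"
  by (rule is_linear_code_codeP[OF finite_Dc])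

lemma card_Dc: "card Dc = 2 ^ (3 * m) - 2 ^ s"
proof -
  have "card (fvec m :: (nat \<Rightarrow> 'a) set) = 2 ^ (3 * m)"
    using card_words[of "{1..m}", where 'a='a] card_UNIV unfolding fvec_eq_words
    by (simp add: power_mult)
  then show ?thesis
    using card_Diff_subset[OF finite_D D_subset] card_D by simp
qed

lemma code_dim_Dc: "code_dim (codeP m Dc) = m"
  using code_dim_codeP[OF finite_Dc] codeword_Dc_ne_0 by blast

lemma min_dist_Dc: "min_dist Dc (codeP m Dc) = 7 * 2 ^ (3 * (m - 1)) - 7 * 2 ^ (s - 3)"
  unfolding min_dist_def nonzero_weights_Dc
  using weights_less by (intro Min_eqI) auto

lemma weight_bounds_Dc:
  assumes "c \<in> codeP m Dc" "c \<noteq> 0"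
  shows "7 * 2 ^ (3 * (m - 1)) - 7 * 2 ^ (s - 3) \<le> hwt Dc c" "hwt Dc c \<le> 7 * 2 ^ (3 * (m - 1))"
proof -
  have "hwt Dc c \<in> nonzero_weights Dc (codeP m Dc)"
    using assms unfolding nonzero_weights_def by blast
  then show "7 * 2 ^ (3 * (m - 1)) - 7 * 2 ^ (s - 3) \<le> hwt Dc c" "hwt Dc c \<le> 7 * 2 ^ (3 * (m - 1))"
    unfolding nonzero_weights_Dc using weights_less by auto
qed

lemma griesmer_Dc: "is_griesmer Dc (codeP m Dc)"
proof -
  have "s - 3 + 3 \<le> 3 * (m - 1)"
    using s_bounds by simp
  from sum_ceiling_griesmer8[OF this]
  have "(\<Sum>i<m. nat \<lceil>real (7 * 8 ^ (m - 1) - 7 * 2 ^ (s - 3)) / 8 ^ i\<rceil>) = 8 ^ m - 8 * 2 ^ (s - 3)" .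
  moreover have "(8::nat) ^ (m - 1) = 2 ^ (3 * (m - 1))" "(8::nat) ^ m = 2 ^ (3 * m)"
    by (simp_all add: power_mult)
  ultimately show ?thesis
    unfolding is_griesmer_def code_dim_Dc min_dist_Dc card_Dc card_UNIV two_pow_s by simp
qed

lemma distance_optimal_Dc: "distance_optimal Dc (codeP m Dc)"
  unfolding distance_optimal_def
proof
  let ?A = "2 ^ (3 * (m - 1)) :: nat" and ?B = "2 ^ (s - 3) :: nat"
  let ?X = "?A - ?B"
  have eight_pow_m: "(8::nat) ^ m = 8 * ?A"
    using s_bounds by (simp add: power_mult power_Suc[symmetric])
  assume "\<exists>C' :: (nat \<Rightarrow> 'a) set. is_nkd_code {1..card Dc} C' (card Dc) (code_dim (codeP m Dc))
      (min_dist Dc (codeP m Dc) + 1)"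
  moreover have "card Dc = 8 * ?X" "min_dist Dc (codeP m Dc) = 7 * ?X"
    using card_Dc min_dist_Dc two_pow_s eight_pow_m by (simp_all add: power_mult diff_mult_distrib2)
  ultimately obtain C' :: "(nat \<Rightarrow> 'a) set" where "is_nkd_code {1..card Dc} C' (8 * ?X) m (7 * ?X + 1)"
    unfolding code_dim_Dc by auto
  from plotkin_bound_dim[OF this]
  have "8 ^ m \<le> 7 * ?X + 1"
    unfolding card_UNIV by simp
  moreover have "0 < ?B"
    by simp
  ultimately show False
    using eight_pow_m two_pow_s_le by linarith
qed

lemma minimal_code_Dc:
  assumes "s \<le> 3 * m - 4"
  shows "is_minimal_code Dc (codeP m Dc)"
proof (rule minimal_code_if_weight_ratio[OF linear_code_Dc])
  show "7 * 2 ^ (3 * (m - 1)) - 7 * 2 ^ (s - 3) \<le> hwt Dc c \<and> hwt Dc c \<le> 7 * 2 ^ (3 * (m - 1))"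
    if "c \<in> codeP m Dc" "c \<noteq> 0" for c
    using weight_bounds_Dc[OF that] by simp
  have "s - 3 + 4 \<le> 3 * (m - 1)"
    using assms s_bounds by linarith
  then have "(2::nat) ^ (s - 3 + 4) \<le> 2 ^ (3 * (m - 1))"
    by (rule power_increasing) simp
  then have "16 * (2::nat) ^ (s - 3) \<le> 2 ^ (3 * (m - 1))"
    by (simp add: power_add)
  moreover have pos: "0 < (2::nat) ^ (s - 3)"
    by simp
  ultimately show "(card (UNIV :: 'a set) - 1) * (7 * 2 ^ (3 * (m - 1)))
      < card (UNIV :: 'a set) * (7 * 2 ^ (3 * (m - 1)) - 7 * 2 ^ (s - 3))"
    unfolding card_UNIV by (simp add: diff_mult_distrib2) (use pos in linarith)
qed

lemma four_weights_Dc: "is_l_weight Dc (codeP m Dc) 4"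
  unfolding is_l_weight_def nonzero_weights_Dc by (rule card_strict_chain_4[OF weights_less(1-3)])

end

theorem mainTheorem6:
  fixes \<omega> :: "'a::{field,finite}"
    and m :: nat and L M N :: "nat set"
  assumes card8: "card (UNIV :: 'a set) = 8"
    and root: "\<omega>^3 + \<omega> + 1 = 0"
    and LMN: "L \<noteq> {}" "M \<noteq> {}" "N \<noteq> {}"
    and proper: "L \<union> M \<union> N \<subset> {1..m}"
    and two: "(L - (M \<union> N) \<noteq> {} \<and> M - (N \<union> L) \<noteq> {}) \<or>
              (M - (N \<union> L) \<noteq> {} \<and> N - (L \<union> M) \<noteq> {}) \<or>
              (L - (M \<union> N) \<noteq> {} \<and> N - (L \<union> M) \<noteq> {})"
  defines "Dc \<equiv> fvec m - sumset3 \<omega> (Delta m L) (Delta m M) (Delta m N)"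
    and "s \<equiv> card L + card M + card N"
  shows "is_nkd_code Dc (codeP m Dc) (2^(3*m) - 2^s) m (7 * 2^(3*(m-1)) - 7 * 2^(s-3))
       \<and> is_l_weight Dc (codeP m Dc) 4
       \<and> nonzero_weights Dc (codeP m Dc) =
           {7 * 2^(3*(m-1)) - 7 * 2^(s-3), 7 * 2^(3*(m-1)) - 6 * 2^(s-3),
            7 * 2^(3*(m-1)) - 4 * 2^(s-3), 7 * 2^(3*(m-1))}
       \<and> is_griesmer Dc (codeP m Dc)
       \<and> distance_optimal Dc (codeP m Dc)
       \<and> (s \<le> 3*m - 4 \<longrightarrow> is_minimal_code Dc (codeP m Dc))"
proof -
  interpret gf8_code \<omega> m L M N
    using card8 root LMN proper two by unfold_locales auto
  show ?thesis
    unfolding Dc_def s_def is_nkd_code_def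
    using linear_code_Dc card_Dc code_dim_Dc min_dist_Dc four_weights_Dc nonzero_weights_Dc
      griesmer_Dc distance_optimal_Dc minimal_code_Dc by simp
qed

end
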